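(* Let $h>0$, $\alpha>2$, $\beta\ge0$, $c>0$, let $V$ satisfy $\sup_t|v_k(t)|\le c_v e^{-\beta|k|}\langle k\rangle^{-\alpha}$ for all $k$, and let $\mathcal{N}$ be a unitary operator on $l^2(\mathbb{Z})$ satisfying, for all $j,k\in\mathbb{Z}$, $$\Big|\mathcal{N}_{jk}-\delta_{jk}e^{\frac{2\pi}{ih}k^2}-\delta_{-j,k}\frac{e^{\frac{2\pi}{ih}k^2}}{ih}\int_0^{2\pi}v_{-2k}(\tau)\,d\tau\Big|\le\frac{c\,e^{-\beta|j-k|}}{\langle j\rangle\langle k\rangle\langle j-k\rangle^{\alpha-1}}.$$ Then there is a constant $c_w$ depending only on $c,c_v,h,\alpha$ such that for every sufficiently large $N$ there exists a unitary $(2N+1)\times(2N+1)$ matrix $U=(u_{jk})_{-N\le j,k\le N}$ with $$|u_{jk}-\mathcal{N}_{jk}|\le\frac{c_w e^{-\beta|j-k|}}{\langle j\rangle\langle k\rangle(N+1)^2\langle j-k\rangle^{\alpha-1}},\qquad -N\le j,k\le N.$$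
   Context: $V(x,t)=\sum_{k\in\mathbb{Z}}v_k(t)e^{ikx}$ is real-valued and $2\pi$-periodic in $t$ with $v_0\equiv0$; $h>0$; $\langle k\rangle=|k|+1$; $\delta$ is the Kronecker delta; $e^{\frac{t}{ih}k^2}=e^{-itk^2/h}$. *)

theory Defs
  imports "HOL-Analysis.Analysis"
begin

text \<open>Japanese bracket: langle k = |k| + 1.\<close>
definition jbr :: "int \<Rightarrow> real" where
  "jbr k = real_of_int \<bar>k\<bar> + 1"

definition potential :: "(int \<Rightarrow> real \<Rightarrow> complex) \<Rightarrow> real \<Rightarrow> real \<Rightarrow> complex" where
  "potential v x t = (\<Sum>\<^sub>\<infinity>k\<in>UNIV. v k t * exp (\<i> * of_int k * of_real x))"

definition is_l2 :: "(int \<Rightarrow> complex) \<Rightarrow> bool" where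
  "is_l2 x \<longleftrightarrow> (\<lambda>k. (cmod (x k))\<^sup>2) summable_on UNIV"

definition l2_norm_sq :: "(int \<Rightarrow> complex) \<Rightarrow> real" where
  "l2_norm_sq x = (\<Sum>\<^sub>\<infinity>k\<in>UNIV. (cmod (x k))\<^sup>2)"

definition mat_apply :: "(int \<Rightarrow> int \<Rightarrow> complex) \<Rightarrow> (int \<Rightarrow> complex) \<Rightarrow> int \<Rightarrow> complex" where
  "mat_apply M x j = (\<Sum>\<^sub>\<infinity>k\<in>UNIV. M j k * x k)"

definition unitary_l2 :: "(int \<Rightarrow> int \<Rightarrow> complex) \<Rightarrow> bool" where
  "unitary_l2 M \<longleftrightarrow>
     (\<forall>x. is_l2 x \<longrightarrow>
        (\<forall>j. (\<lambda>k. M j k * x k) summable_on UNIV) \<and>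
        is_l2 (mat_apply M x) \<and>
        l2_norm_sq (mat_apply M x) = l2_norm_sq x) \<and>
     (\<forall>y. is_l2 y \<longrightarrow> (\<exists>x. is_l2 x \<and> mat_apply M x = y))"

definition unitary_fin :: "nat \<Rightarrow> (int \<Rightarrow> int \<Rightarrow> complex) \<Rightarrow> bool" where
  "unitary_fin N U \<longleftrightarrow>
     (\<forall>j\<in>{-int N..int N}. \<forall>l\<in>{-int N..int N}.
        (\<Sum>k\<in>{-int N..int N}. U j k * cnj (U l k)) = (if j = l then 1 else 0) \<and>
        (\<Sum>k\<in>{-int N..int N}. cnj (U k j) * U k l) = (if j = l then 1 else 0))"

end

theory Submission
  imports Defs "HOL-Computational_Algebra.Formal_Power_Series" "Jordan_Normal_Form.Determinant"
begin

text \<open>Let \<open>A\<close> be the restriction of \<open>\<N>\<close> to \<open>I = {-N..N}\<close>. The columns of \<open>\<N>\<close> are orthonormal,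
  so \<open>A\<^sup>* A = 1 - E\<close> with \<open>E j k = \<Sum>l\<notin>I. cnj (\<N> l j) * \<N> l k\<close>. For \<open>l \<notin> I\<close> and \<open>j \<in> I\<close> neither the
  diagonal nor the antidiagonal part of \<open>\<N> l j\<close> is present, so only the error term survives, and its
  decay in \<open>l\<close> gives \<open>|E j k| \<le> \<epsilon> w j k\<close> with \<open>\<epsilon> = O((N+1)\<^sup>-\<^sup>2)\<close> and
  \<open>w j k = e\<^sup>-\<^sup>\<beta>\<^sup>|\<^sup>j\<^sup>-\<^sup>k\<^sup>| / (\<langle>j\<rangle> \<langle>k\<rangle> \<langle>j-k\<rangle>\<^sup>\<alpha>\<^sup>-\<^sup>1)\<close>. Since \<open>\<Sum>l. w j l * w l k \<le> K w j k\<close>, the binomial series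
  \<open>S = (1 - E)\<^sup>-\<^sup>1\<^sup>/\<^sup>2\<close> converges once \<open>K \<epsilon> \<le> 1/2\<close>, with \<open>|S - 1| \<le> 2 \<epsilon> w\<close>. Then \<open>U = A S\<close> is unitary,
  and \<open>U - A = A (S - 1)\<close> is bounded by the row sums of \<open>|A|\<close> against \<open>w\<close>, which are \<open>O(w)\<close>.\<close>

section \<open>Matrices indexed by a finite set\<close>

definition mmul :: "'a set \<Rightarrow> ('a \<Rightarrow> 'a \<Rightarrow> complex) \<Rightarrow> ('a \<Rightarrow> 'a \<Rightarrow> complex) \<Rightarrow> 'a \<Rightarrow> 'a \<Rightarrow> complex"
  where "mmul I F G = (\<lambda>j k. \<Sum>l\<in>I. F j l * G l k)"

definition kdelta :: "'a \<Rightarrow> 'a \<Rightarrow> complex"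
  where "kdelta j k = (if j = k then 1 else 0)"

fun mpow :: "'a set \<Rightarrow> ('a \<Rightarrow> 'a \<Rightarrow> complex) \<Rightarrow> nat \<Rightarrow> 'a \<Rightarrow> 'a \<Rightarrow> complex" where
  "mpow I E 0 = kdelta"
| "mpow I E (Suc n) = mmul I (mpow I E n) E"

lemma mmul_assoc: "finite I \<Longrightarrow> mmul I (mmul I F G) H = mmul I F (mmul I G H)"
  unfolding mmul_def
  by (auto simp: sum_distrib_left sum_distrib_right mult.assoc intro!: ext sum.swap)

lemma mmul_kdelta_left:
  assumes "finite I" "j \<in> I" shows "mmul I kdelta F j k = F j k"
proof -
  have "mmul I kdelta F j k = (\<Sum>l\<in>I. if j = l then F l k else 0)"
    unfolding mmul_def kdelta_def by (rule sum.cong) auto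
  then show ?thesis using assms by (simp add: sum.delta)
qed

lemma mmul_kdelta_right:
  assumes "finite I" "k \<in> I" shows "mmul I F kdelta j k = F j k"
proof -
  have "mmul I F kdelta j k = (\<Sum>l\<in>I. if l = k then F j l else 0)"
    unfolding mmul_def kdelta_def by (rule sum.cong) auto
  then show ?thesis using assms by (simp add: sum.delta')
qed

lemma mmul_cong:
  "(\<And>l. l \<in> I \<Longrightarrow> F j l = F' j l) \<Longrightarrow> (\<And>l. l \<in> I \<Longrightarrow> G l k = G' l k)
    \<Longrightarrow> mmul I F G j k = mmul I F' G' j k"
  unfolding mmul_def by (auto intro!: sum.cong)

lemma mmul_diff_right: "mmul I F (\<lambda>j k. G j k - H j k) j k = mmul I F G j k - mmul I F H j k"
  unfolding mmul_def by (simp add: right_diff_distrib sum_subtractf)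

lemma mmul_diff_left: "mmul I (\<lambda>j k. G j k - H j k) F j k = mmul I G F j k - mmul I H F j k"
  unfolding mmul_def by (simp add: left_diff_distrib sum_subtractf)

lemma mmul_suminf_left:
  assumes "\<And>l. l \<in> I \<Longrightarrow> summable (\<lambda>n. F n l k)"
  shows "mmul I G (\<lambda>j k. \<Sum>n. F n j k) j k = (\<Sum>n. mmul I G (F n) j k)"
proof -
  have "mmul I G (\<lambda>j k. \<Sum>n. F n j k) j k = (\<Sum>l\<in>I. \<Sum>n. G j l * F n l k)"
    unfolding mmul_def by (rule sum.cong[OF refl], rule suminf_mult[symmetric], rule assms)
  also have "\<dots> = (\<Sum>n. mmul I G (F n) j k)"
    unfolding mmul_def by (rule suminf_sum[symmetric]) (intro summable_mult assms)
  finally show ?thesis .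
qed

lemma mmul_suminf_right:
  assumes "\<And>l. l \<in> I \<Longrightarrow> summable (\<lambda>n. F n j l)"
  shows "mmul I (\<lambda>j k. \<Sum>n. F n j k) G j k = (\<Sum>n. mmul I (F n) G j k)"
proof -
  have "mmul I (\<lambda>j k. \<Sum>n. F n j k) G j k = (\<Sum>l\<in>I. \<Sum>n. F n j l * G l k)"
    unfolding mmul_def by (rule sum.cong[OF refl], rule suminf_mult2, rule assms)
  also have "\<dots> = (\<Sum>n. mmul I (F n) G j k)"
    unfolding mmul_def by (rule suminf_sum[symmetric]) (intro summable_mult2 assms)
  finally show ?thesis .
qed

lemma mpow_add:
  assumes "finite I" "j \<in> I" "k \<in> I"
  shows "mpow I E (m + n) j k = mmul I (mpow I E m) (mpow I E n) j k"
  using assms(3)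
proof (induction n arbitrary: k)
  case 0
  then show ?case using assms by (simp add: mmul_kdelta_right)
next
  case (Suc n)
  have "mpow I E (m + Suc n) j k = mmul I (mmul I (mpow I E m) (mpow I E n)) E j k"
    by (simp, rule mmul_cong) (auto intro: Suc.IH)
  also have "\<dots> = mmul I (mpow I E m) (mpow I E (Suc n)) j k"
    using mmul_assoc[OF assms(1)] by simp
  finally show ?case .
qed

lemma mpow_Suc_left:
  assumes "finite I" "j \<in> I" "k \<in> I"
  shows "mpow I E (Suc n) j k = mmul I E (mpow I E n) j k"
proof -
  have "mpow I E (1 + n) j k = mmul I (mpow I E 1) (mpow I E n) j k"
    by (rule mpow_add[OF assms])
  also have "\<dots> = mmul I E (mpow I E n) j k"
    by (rule mmul_cong) (use assms in \<open>auto simp: mmul_kdelta_left\<close>)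
  finally show ?thesis by simp
qed

lemma mpow_cnj:
  assumes "finite I" and herm: "\<And>j k. j \<in> I \<Longrightarrow> k \<in> I \<Longrightarrow> cnj (E j k) = E k j"
  shows "j \<in> I \<Longrightarrow> k \<in> I \<Longrightarrow> cnj (mpow I E n j k) = mpow I E n k j"
proof (induction n arbitrary: j k)
  case 0
  then show ?case by (auto simp: kdelta_def)
next
  case (Suc n)
  have "cnj (mpow I E (Suc n) j k) = (\<Sum>l\<in>I. E k l * mpow I E n l j)"
    using Suc by (auto simp: mmul_def herm mult.commute intro!: sum.cong)
  also have "\<dots> = mpow I E (Suc n) k j"
    using mpow_Suc_left[OF assms(1) Suc.prems(2,1)] by (simp add: mmul_def)
  finally show ?case .
qed

lemma mmul_right_inverse:
  assumes "finite I" and left: "\<And>j k. j \<in> I \<Longrightarrow> k \<in> I \<Longrightarrow> mmul I B A j k = kdelta j k"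
    and "j \<in> I" "k \<in> I"
  shows "mmul I A B j k = kdelta j k"
proof -
  define n where "n = card I"
  obtain f where f: "bij_betw f {0..<n} I"
    using ex_bij_betw_nat_finite[OF assms(1)] unfolding n_def by blast
  have f_in: "a < n \<Longrightarrow> f a \<in> I" for a using f by (auto dest: bij_betwE)
  have f_eq: "a < n \<Longrightarrow> b < n \<Longrightarrow> f a = f b \<longleftrightarrow> a = b" for a b
    using f by (auto simp: bij_betw_def inj_on_def)
  have entry: "(mat n n (\<lambda>(a, b). F (f a) (f b)) * mat n n (\<lambda>(a, b). G (f a) (f b))) $$ (a, b)
      = mmul I F G (f a) (f b)" if "a < n" "b < n" for F G a b
    using that sum.reindex_bij_betw[OF f, of "\<lambda>l. F (f a) l * G l (f b)"]
    by (simp add: scalar_prod_def mmul_def atLeast0LessThan)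
  define Am where "Am = mat n n (\<lambda>(a, b). A (f a) (f b))"
  define Bm where "Bm = mat n n (\<lambda>(a, b). B (f a) (f b))"
  have "Bm * Am = 1\<^sub>m n"
  proof (rule eq_matI)
    fix a b assume "a < dim_row (1\<^sub>m n)" "b < dim_col (1\<^sub>m n)"
    then have "a < n" "b < n" by auto
    then show "(Bm * Am) $$ (a, b) = 1\<^sub>m n $$ (a, b)"
      unfolding Am_def Bm_def entry[OF \<open>a < n\<close> \<open>b < n\<close>] by (simp add: left f_in f_eq kdelta_def)
  qed (auto simp: Am_def Bm_def)
  then have AB: "Am * Bm = 1\<^sub>m n"
    by (rule mat_mult_left_right_inverse[rotated 2]) (auto simp: Am_def Bm_def)
  obtain a b where ab: "a < n" "b < n" "j = f a" "k = f b"
    using f assms(3,4) by (auto simp: bij_betw_def)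
  show ?thesis
    using arg_cong[OF AB, of "\<lambda>M. M $$ (a, b)"] ab f_eq[OF ab(1,2)]
    unfolding Am_def Bm_def entry[OF ab(1,2)] by (simp add: kdelta_def)
qed

section \<open>The inverse square root of a small hermitian perturbation of the identity\<close>

text \<open>Taylor coefficients of \<open>(1 - x)\<^sup>-\<^sup>1\<^sup>/\<^sup>2\<close>.\<close>
definition inv_sqrt_coeff :: "nat \<Rightarrow> real"
  where "inv_sqrt_coeff n = (-1) ^ n * ((-1/2) gchoose n)"

lemma inv_sqrt_coeff_0 [simp]: "inv_sqrt_coeff 0 = 1"
  by (simp add: inv_sqrt_coeff_def)

lemma inv_sqrt_coeff_Suc: "inv_sqrt_coeff (Suc n) = inv_sqrt_coeff n * ((real n + 1/2) / (real n + 1))"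
proof -
  define g where "g = (-1/2::real) gchoose n"
  define g' where "g' = (-1/2::real) gchoose (Suc n)"
  have "(-1/2) * g = real n * g + (real n + 1) * g'"
    using gbinomial_mult_1[of "-1/2::real" n] unfolding g_def g'_def by simp
  then have "(real n + 1) * g' = - g * (real n + 1/2)"
    by (simp add: algebra_simps)
  then have "g' = - g * (real n + 1/2) / (real n + 1)"
    by (simp add: field_simps)
  then show ?thesis
    unfolding inv_sqrt_coeff_def g_def[symmetric] g'_def[symmetric] by simp
qed

lemma inv_sqrt_coeff_bounds: "0 \<le> inv_sqrt_coeff n \<and> inv_sqrt_coeff n \<le> 1"
proof (induction n)
  case (Suc n)
  have "inv_sqrt_coeff n * (real n + 1/2) \<le> 1 * (real n + 1/2)"
    using Suc by (intro mult_right_mono) auto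
  then show ?case
    using Suc by (simp add: inv_sqrt_coeff_Suc field_simps del: of_nat_Suc)
qed simp

text \<open>The coefficients of the square of \<open>(1 - x)\<^sup>-\<^sup>1\<^sup>/\<^sup>2\<close> are those of \<open>(1 - x)\<^sup>-\<^sup>1\<close>.\<close>
lemma inv_sqrt_coeff_convolution: "(\<Sum>i\<le>p. inv_sqrt_coeff i * inv_sqrt_coeff (p - i)) = 1"
proof -
  have "fps_binomial (-1/2 + -1/2 :: real) = fps_binomial (-1/2) * fps_binomial (-1/2)"
    by (rule fps_binomial_add_mult)
  then have "fps_nth (fps_binomial (-1/2) * fps_binomial (-1/2 :: real)) p = fps_nth (fps_binomial (-1)) p"
    by simp
  then have conv: "(\<Sum>i=0..p. ((-1/2::real) gchoose i) * ((-1/2) gchoose (p - i))) = (-1) gchoose p"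
    by (simp add: fps_mult_nth)
  have minus_one: "((-1::real) gchoose p) = (-1) ^ p"
    using gbinomial_minus[of "1::real" p] binomial_gbinomial[of p p, where 'a=real] by simp
  have "(\<Sum>i\<le>p. inv_sqrt_coeff i * inv_sqrt_coeff (p - i))
      = (-1) ^ p * (\<Sum>i=0..p. ((-1/2::real) gchoose i) * ((-1/2) gchoose (p - i)))"
    unfolding inv_sqrt_coeff_def atMost_atLeast0 sum_distrib_left
    by (rule sum.cong) (auto simp: power_add[symmetric])
  also have "\<dots> = (-1) ^ p * (-1) ^ p"
    by (simp only: conv minus_one)
  also have "\<dots> = 1"
    by (simp add: power_mult_distrib[symmetric])
  finally show ?thesis .
qed

locale small_hermitian =
  fixes I :: "'a set" and E :: "'a \<Rightarrow> 'a \<Rightarrow> complex" and w :: "'a \<Rightarrow> 'a \<Rightarrow> real"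
    and K \<epsilon> :: real
  assumes finite_I: "finite I"
    and hermitian: "\<And>j k. j \<in> I \<Longrightarrow> k \<in> I \<Longrightarrow> cnj (E j k) = E k j"
    and w_nonneg: "\<And>j k. 0 \<le> w j k"
    and w_le_one: "\<And>j k. j \<in> I \<Longrightarrow> k \<in> I \<Longrightarrow> w j k \<le> 1"
    and w_convolution: "\<And>j k. j \<in> I \<Longrightarrow> k \<in> I \<Longrightarrow> (\<Sum>l\<in>I. w j l * w l k) \<le> K * w j k"
    and K_ge_one: "1 \<le> K"
    and eps_nonneg: "0 \<le> \<epsilon>"
    and K_eps: "K * \<epsilon> \<le> 1/2"
    and E_bound: "\<And>j k. j \<in> I \<Longrightarrow> k \<in> I \<Longrightarrow> cmod (E j k) \<le> \<epsilon> * w j k"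
begin

abbreviation "P \<equiv> mpow I E"

lemma eps_le_half: "\<epsilon> \<le> 1/2"
  using mult_right_mono[OF K_ge_one eps_nonneg] K_eps by simp

lemma mpow_Suc_bound: "j \<in> I \<Longrightarrow> k \<in> I \<Longrightarrow> cmod (P (Suc n) j k) \<le> \<epsilon> * (1/2) ^ n * w j k"
proof (induction n arbitrary: k)
  case 0
  then show ?case using E_bound[of j k] by (simp add: mmul_kdelta_left finite_I)
next
  case (Suc n)
  have "cmod (P (Suc (Suc n)) j k) \<le> (\<Sum>l\<in>I. cmod (P (Suc n) j l) * cmod (E l k))"
    unfolding mpow.simps(2)[of I E "Suc n"] mmul_def
    by (rule order_trans[OF norm_sum]) (simp add: norm_mult)
  also have "\<dots> \<le> (\<Sum>l\<in>I. (\<epsilon> * (1/2) ^ n * w j l) * (\<epsilon> * w l k))"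
    using Suc eps_nonneg w_nonneg
    by (intro sum_mono mult_mono E_bound) (auto intro: order_trans[OF norm_ge_zero])
  also have "\<dots> = \<epsilon> * (1/2) ^ n * \<epsilon> * (\<Sum>l\<in>I. w j l * w l k)"
    by (simp add: sum_distrib_left mult_ac)
  also have "\<dots> \<le> \<epsilon> * (1/2) ^ n * \<epsilon> * (K * w j k)"
    using Suc eps_nonneg by (intro mult_left_mono w_convolution) auto
  also have "\<dots> = \<epsilon> * (1/2) ^ n * (K * \<epsilon>) * w j k"
    by (simp add: mult_ac)
  also have "\<dots> \<le> \<epsilon> * (1/2) ^ n * (1/2) * w j k"
    using eps_nonneg K_eps w_nonneg by (intro mult_right_mono mult_left_mono) auto
  finally show ?case by simp
qed

lemma mpow_bound: "j \<in> I \<Longrightarrow> k \<in> I \<Longrightarrow> cmod (P n j k) \<le> (1/2) ^ n"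
proof (cases n)
  case (Suc m)
  assume jk: "j \<in> I" "k \<in> I"
  have "cmod (P n j k) \<le> \<epsilon> * (1/2) ^ m * w j k" using mpow_Suc_bound jk Suc by simp
  also have "\<dots> \<le> (1/2) * (1/2) ^ m * 1"
    using eps_le_half eps_nonneg w_le_one[OF jk] w_nonneg by (intro mult_mono) auto
  finally show ?thesis using Suc by simp
qed (simp add: kdelta_def)

lemma summable_mpow: "j \<in> I \<Longrightarrow> k \<in> I \<Longrightarrow> summable (\<lambda>n. P n j k)"
  by (rule summable_comparison_test[OF _ summable_geometric[of "1/2::real"]]) (auto intro: mpow_bound)

lemma summable_norm_inv_sqrt_series:
  assumes "j \<in> I" "k \<in> I"
  shows "summable (\<lambda>n. norm (complex_of_real (inv_sqrt_coeff n) * P n j k))"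
proof (rule summable_comparison_test[OF _ summable_geometric[of "1/2::real"]])
  have "\<bar>inv_sqrt_coeff n\<bar> * cmod (P n j k) \<le> 1 * (1/2) ^ n" for n
    by (rule mult_mono) (use inv_sqrt_coeff_bounds[of n] mpow_bound[OF assms] in auto)
  then show "\<exists>N. \<forall>n\<ge>N. norm (norm (complex_of_real (inv_sqrt_coeff n) * P n j k)) \<le> (1/2) ^ n"
    by (auto simp: norm_mult)
qed simp

lemma summable_inv_sqrt_series:
  "j \<in> I \<Longrightarrow> k \<in> I \<Longrightarrow> summable (\<lambda>n. complex_of_real (inv_sqrt_coeff n) * P n j k)"
  by (rule summable_norm_cancel[OF summable_norm_inv_sqrt_series])

definition inv_sqrt :: "'a \<Rightarrow> 'a \<Rightarrow> complex"
  where "inv_sqrt j k = (\<Sum>n. complex_of_real (inv_sqrt_coeff n) * P n j k)"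

definition neumann :: "'a \<Rightarrow> 'a \<Rightarrow> complex"
  where "neumann j k = (\<Sum>n. P n j k)"

lemma inv_sqrt_cnj:
  assumes "j \<in> I" "k \<in> I"
  shows "cnj (inv_sqrt j k) = inv_sqrt k j"
proof -
  have "(\<lambda>n. cnj (complex_of_real (inv_sqrt_coeff n) * P n j k)) sums cnj (inv_sqrt j k)"
    unfolding sums_cnj inv_sqrt_def using summable_inv_sqrt_series[OF assms] by (simp add: summable_sums)
  then show ?thesis
    using mpow_cnj[OF finite_I hermitian assms] unfolding inv_sqrt_def by (simp add: sums_iff)
qed

lemma inv_sqrt_commute:
  assumes "j \<in> I" "k \<in> I"
  shows "mmul I inv_sqrt E j k = mmul I E inv_sqrt j k"
proof -
  let ?a = "\<lambda>n j k. complex_of_real (inv_sqrt_coeff n) * P n j k"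
  have series: "inv_sqrt = (\<lambda>j k. \<Sum>n. ?a n j k)"
    by (simp add: inv_sqrt_def fun_eq_iff)
  have "mmul I inv_sqrt E j k = (\<Sum>n. mmul I (?a n) E j k)"
    unfolding series by (rule mmul_suminf_right) (rule summable_inv_sqrt_series[OF assms(1)])
  also have "\<dots> = (\<Sum>n. mmul I E (?a n) j k)"
  proof (rule suminf_cong)
    fix n
    have "mmul I (?a n) E j k = complex_of_real (inv_sqrt_coeff n) * P (Suc n) j k"
      by (simp add: mmul_def sum_distrib_left mult_ac)
    also have "\<dots> = mmul I E (?a n) j k"
      unfolding mpow_Suc_left[OF finite_I assms] by (simp add: mmul_def sum_distrib_left mult_ac)
    finally show "mmul I (?a n) E j k = mmul I E (?a n) j k" .
  qed
  also have "\<dots> = mmul I E inv_sqrt j k"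
    unfolding series by (rule mmul_suminf_left[symmetric]) (rule summable_inv_sqrt_series[OF _ assms(2)])
  finally show ?thesis .
qed

lemma inv_sqrt_square:
  assumes "j \<in> I" "k \<in> I"
  shows "mmul I inv_sqrt inv_sqrt j k = neumann j k"
proof -
  let ?a = "\<lambda>i j l. complex_of_real (inv_sqrt_coeff i) * P i j l"
  have "(\<lambda>p. \<Sum>l\<in>I. \<Sum>i\<le>p. ?a i j l * ?a (p - i) l k) sums (\<Sum>l\<in>I. inv_sqrt j l * inv_sqrt l k)"
    unfolding inv_sqrt_def
    by (intro sums_sum Cauchy_product_sums summable_norm_inv_sqrt_series assms)
  moreover have "(\<Sum>l\<in>I. \<Sum>i\<le>p. ?a i j l * ?a (p - i) l k) = P p j k" for p
  proof -
    have "(\<Sum>l\<in>I. \<Sum>i\<le>p. ?a i j l * ?a (p - i) l k)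
        = (\<Sum>i\<le>p. complex_of_real (inv_sqrt_coeff i * inv_sqrt_coeff (p - i))
                    * mmul I (P i) (P (p - i)) j k)"
      unfolding mmul_def by (subst sum.swap) (simp add: sum_distrib_left mult_ac)
    also have "\<dots> = complex_of_real (\<Sum>i\<le>p. inv_sqrt_coeff i * inv_sqrt_coeff (p - i)) * P p j k"
      using mpow_add[OF finite_I assms, symmetric] by (simp add: sum_distrib_right)
    finally show ?thesis by (simp add: inv_sqrt_coeff_convolution)
  qed
  ultimately show ?thesis
    unfolding mmul_def neumann_def by (simp add: sums_iff)
qed

lemma neumann_inverse:
  assumes "j \<in> I" "k \<in> I"
  shows "mmul I neumann (\<lambda>j k. kdelta j k - E j k) j k = kdelta j k"
proof -
  have series: "neumann = (\<lambda>j k. \<Sum>n. P n j k)"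
    by (simp add: neumann_def fun_eq_iff)
  have "mmul I neumann E j k = (\<Sum>p. P (Suc p) j k)"
    unfolding series by (simp add: mmul_suminf_right summable_mpow assms)
  also have "\<dots> = neumann j k - kdelta j k"
    unfolding neumann_def using suminf_split_head[OF summable_mpow[OF assms]] by simp
  finally show ?thesis
    using assms by (simp add: mmul_diff_right mmul_kdelta_right finite_I)
qed

lemma inv_sqrt_sandwich:
  assumes "j \<in> I" "k \<in> I"
  shows "mmul I (mmul I inv_sqrt (\<lambda>j k. kdelta j k - E j k)) inv_sqrt j k = kdelta j k"
proof -
  let ?M = "\<lambda>j k. kdelta j k - E j k"
  have commute: "mmul I inv_sqrt ?M a b = mmul I ?M inv_sqrt a b" if "a \<in> I" "b \<in> I" for a b
    using that by (simp add: mmul_diff_right mmul_diff_left mmul_kdelta_right mmul_kdelta_left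
        finite_I inv_sqrt_commute)
  have "mmul I (mmul I inv_sqrt ?M) inv_sqrt j k = mmul I inv_sqrt (mmul I ?M inv_sqrt) j k"
    by (simp add: mmul_assoc[OF finite_I])
  also have "\<dots> = mmul I (mmul I inv_sqrt inv_sqrt) ?M j k"
    by (subst mmul_assoc[OF finite_I], rule mmul_cong) (use commute assms in auto)
  also have "\<dots> = mmul I neumann ?M j k"
    by (rule mmul_cong) (use inv_sqrt_square assms in auto)
  finally show ?thesis using neumann_inverse[OF assms] by simp
qed

lemma inv_sqrt_minus_kdelta_bound:
  assumes "j \<in> I" "k \<in> I"
  shows "cmod (inv_sqrt j k - kdelta j k) \<le> 2 * \<epsilon> * w j k"
proof -
  have "inv_sqrt j k - kdelta j k = (\<Sum>n. complex_of_real (inv_sqrt_coeff (Suc n)) * P (Suc n) j k)"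
    unfolding inv_sqrt_def using suminf_split_head[OF summable_inv_sqrt_series[OF assms]] by simp
  also have "cmod \<dots> \<le> (\<Sum>n. \<epsilon> * w j k * (1/2) ^ n)"
  proof (rule norm_suminf_le)
    fix n
    have "\<bar>inv_sqrt_coeff (Suc n)\<bar> * cmod (P (Suc n) j k) \<le> 1 * (\<epsilon> * (1/2) ^ n * w j k)"
      by (rule mult_mono) (use inv_sqrt_coeff_bounds[of "Suc n"] mpow_Suc_bound[OF assms] in auto)
    then show "cmod (complex_of_real (inv_sqrt_coeff (Suc n)) * P (Suc n) j k) \<le> \<epsilon> * w j k * (1/2) ^ n"
      by (simp add: norm_mult mult_ac)
  qed (intro summable_mult summable_geometric, simp)
  also have "\<dots> = 2 * \<epsilon> * w j k"
    using sums_unique[OF sums_mult[OF geometric_sums[of "1/2::real"], of "\<epsilon> * w j k"]] by simp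
  finally show ?thesis .
qed

lemma mmul_inv_sqrt_unitary:
  assumes gram: "\<And>j k. j \<in> I \<Longrightarrow> k \<in> I \<Longrightarrow> (\<Sum>l\<in>I. cnj (A l j) * A l k) = kdelta j k - E j k"
    and "j \<in> I" "k \<in> I"
  shows "(\<Sum>l\<in>I. cnj (mmul I A inv_sqrt l j) * mmul I A inv_sqrt l k) = kdelta j k"
    and "(\<Sum>l\<in>I. mmul I A inv_sqrt j l * cnj (mmul I A inv_sqrt k l)) = kdelta j k"
proof -
  let ?U = "mmul I A inv_sqrt" and ?A_adj = "\<lambda>a b. cnj (A b a)"
  have isometry: "(\<Sum>l\<in>I. cnj (?U l j) * ?U l k) = kdelta j k" if "j \<in> I" "k \<in> I" for j k
  proof -
    have adj: "cnj (?U l j) = mmul I inv_sqrt ?A_adj j l" for l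
      unfolding mmul_def using inv_sqrt_cnj[OF _ \<open>j \<in> I\<close>] by (auto intro!: sum.cong simp: mult.commute)
    have "(\<Sum>l\<in>I. cnj (?U l j) * ?U l k) = mmul I (mmul I inv_sqrt ?A_adj) ?U j k"
      unfolding adj by (simp add: mmul_def)
    also have "\<dots> = mmul I (mmul I inv_sqrt (mmul I ?A_adj A)) inv_sqrt j k"
      by (simp add: mmul_assoc[OF finite_I])
    also have "\<dots> = mmul I (mmul I inv_sqrt (\<lambda>j k. kdelta j k - E j k)) inv_sqrt j k"
      by (rule mmul_cong refl)+ (use gram in \<open>auto simp: mmul_def\<close>)
    finally show ?thesis
      using inv_sqrt_sandwich[OF that] by simp
  qed
  then show "(\<Sum>l\<in>I. cnj (?U l j) * ?U l k) = kdelta j k"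
    using assms(2,3) .
  have "mmul I ?U (\<lambda>a b. cnj (?U b a)) j k = kdelta j k"
    by (rule mmul_right_inverse[OF finite_I _ assms(2,3)])
      (simp add: mmul_def[of I "\<lambda>a b. cnj (?U b a)" ?U] isometry)
  then show "(\<Sum>l\<in>I. ?U j l * cnj (?U k l)) = kdelta j k"
    by (simp add: mmul_def)
qed

lemma mmul_inv_sqrt_minus_bound:
  assumes "k \<in> I"
  shows "cmod (mmul I A inv_sqrt j k - A j k) \<le> 2 * \<epsilon> * (\<Sum>l\<in>I. cmod (A j l) * w l k)"
proof -
  have "mmul I A inv_sqrt j k - A j k = (\<Sum>l\<in>I. A j l * (inv_sqrt l k - kdelta l k))"
    using mmul_kdelta_right[OF finite_I assms, of A j]
    by (simp add: mmul_def right_diff_distrib sum_subtractf)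
  then have "cmod (mmul I A inv_sqrt j k - A j k) \<le> (\<Sum>l\<in>I. cmod (A j l) * (2 * \<epsilon> * w l k))"
    using inv_sqrt_minus_kdelta_bound[OF _ assms]
    by (auto simp: norm_mult intro!: order_trans[OF norm_sum] sum_mono mult_left_mono)
  then show ?thesis
    by (simp add: sum_distrib_left mult_ac)
qed

end

section \<open>The decay weight\<close>

lemma jbr_ge_one: "1 \<le> jbr k"
  by (simp add: jbr_def)

lemma jbr_pos [simp]: "0 < jbr k"
  by (simp add: jbr_def)

lemma jbr_nonneg [simp]: "0 \<le> jbr k"
  using jbr_pos[of k] by linarith

lemma jbr_nonzero [simp]: "jbr k \<noteq> 0"
  using jbr_pos[of k] by linarith

lemma jbr_uminus [simp]: "jbr (- k) = jbr k"
  by (simp add: jbr_def)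

lemma jbr_add_le: "jbr (a + b) \<le> jbr a * jbr b"
proof -
  have "real_of_int \<bar>a + b\<bar> \<le> real_of_int \<bar>a\<bar> + real_of_int \<bar>b\<bar>"
    by linarith
  moreover have "0 \<le> real_of_int \<bar>a\<bar> * real_of_int \<bar>b\<bar>"
    by simp
  ultimately have "real_of_int \<bar>a + b\<bar> + 1 \<le> (real_of_int \<bar>a\<bar> + 1) * (real_of_int \<bar>b\<bar> + 1)"
    by (simp only: algebra_simps)
  then show ?thesis
    unfolding jbr_def by simp
qed

lemma jbr_powr_add_le: "0 \<le> q \<Longrightarrow> jbr (a + b) powr q \<le> jbr a powr q * jbr b powr q"
  using jbr_add_le[of a b] jbr_pos
  by (simp add: powr_mono2 less_imp_le flip: powr_mult)

lemma summable_jbr_powr: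
  assumes "p > 1"
  shows "(\<lambda>m. jbr m powr (-p)) summable_on UNIV"
proof -
  have "summable (\<lambda>n::nat. real (Suc n) powr (-p))"
    using assms by (subst summable_Suc_iff) (simp add: summable_real_powr_iff)
  then have "(\<lambda>n::nat. (real n + 1) powr (-p)) summable_on UNIV"
    by (intro summable_nonneg_imp_summable_on) (simp_all add: add.commute)
  then have "(\<lambda>m. jbr m powr (-p)) summable_on range int"
    "(\<lambda>m. jbr m powr (-p)) summable_on range (\<lambda>n::nat. - int n)"
    by (subst summable_on_reindex; auto simp: o_def jbr_def add.commute inj_on_def)+
  moreover have "x \<in> range int \<union> range (\<lambda>n::nat. - int n)" for x :: int
    by (cases "0 \<le> x") (auto intro: image_eqI[of _ _ "nat (- x)"] image_eqI[of _ _ "nat x"])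
  then have "range int \<union> range (\<lambda>n::nat. - int n) = UNIV"
    by blast
  ultimately show ?thesis
    using summable_on_union by metis
qed

definition zeta_jbr :: "real \<Rightarrow> real"
  where "zeta_jbr q = (\<Sum>\<^sub>\<infinity>m\<in>UNIV. jbr m powr (-q))"

lemma zeta_jbr_nonneg: "0 \<le> zeta_jbr q"
  unfolding zeta_jbr_def by (rule infsum_nonneg) simp

lemma zeta_jbr_2_ge_one: "1 \<le> zeta_jbr 2"
  using finite_sum_le_infsum[OF summable_jbr_powr[of 2], of "{0}"]
  by (simp add: zeta_jbr_def jbr_def)

lemma jbr_powr_shift:
  assumes "q > 1"
  shows "((\<lambda>l. jbr (l - j) powr (-q)) has_sum zeta_jbr q) UNIV"
proof -
  have "bij (\<lambda>l::int. l - j)"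
    by (rule bij_betw_byWitness[where f' = "\<lambda>m. m + j"]) auto
  then show ?thesis
    using has_sum_reindex_bij_betw[of "\<lambda>l::int. l - j" UNIV UNIV "\<lambda>m. jbr m powr (-q)"]
      has_sum_infsum[OF summable_jbr_powr[OF assms]]
    unfolding zeta_jbr_def by (simp add: o_def)
qed

definition decay_weight :: "real \<Rightarrow> real \<Rightarrow> int \<Rightarrow> int \<Rightarrow> real" where
  "decay_weight \<beta> \<alpha> j k = exp (- \<beta> * \<bar>real_of_int (j - k)\<bar>) / (jbr j * jbr k * jbr (j - k) powr (\<alpha> - 1))"

lemma decay_weight_nonneg: "0 \<le> decay_weight \<beta> \<alpha> j k"
  unfolding decay_weight_def using jbr_pos by (simp add: less_imp_le)

lemma decay_weight_le_one:
  assumes "0 \<le> \<beta>" "1 \<le> \<alpha>"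
  shows "decay_weight \<beta> \<alpha> j k \<le> 1"
proof -
  have "1 \<le> jbr (j - k) powr (\<alpha> - 1)"
    using jbr_ge_one assms by (intro ge_one_powr_ge_zero) auto
  then have "1 * 1 * 1 \<le> jbr j * jbr k * jbr (j - k) powr (\<alpha> - 1)"
    using jbr_ge_one jbr_pos by (intro mult_mono) (auto simp: less_imp_le)
  moreover have "exp (- \<beta> * \<bar>real_of_int (j - k)\<bar>) \<le> 1"
    using assms by simp
  ultimately have "exp (- \<beta> * \<bar>real_of_int (j - k)\<bar>) / (jbr j * jbr k * jbr (j - k) powr (\<alpha> - 1)) \<le> 1 / 1"
    by (intro frac_le) auto
  then show ?thesis
    unfolding decay_weight_def by simp
qed

lemma exp_decay_triangle:
  assumes "0 \<le> \<beta>"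
  shows "exp (- \<beta> * \<bar>real_of_int (j - l)\<bar>) * exp (- \<beta> * \<bar>real_of_int (l - k)\<bar>)
    \<le> exp (- \<beta> * \<bar>real_of_int (j - k)\<bar>)"
proof -
  have "\<beta> * \<bar>real_of_int (j - k)\<bar> \<le> \<beta> * (\<bar>real_of_int (j - l)\<bar> + \<bar>real_of_int (l - k)\<bar>)"
    by (rule mult_left_mono[OF _ assms]) linarith
  then show ?thesis
    by (simp add: algebra_simps flip: exp_add)
qed

lemma decay_weight_mult_le:
  assumes "0 \<le> \<beta>" "1 \<le> \<alpha>"
  shows "decay_weight \<beta> \<alpha> j l * decay_weight \<beta> \<alpha> l k \<le> decay_weight \<beta> \<alpha> j k * jbr l powr (-2)"
proof -
  define a where "a = jbr (j - l) powr (\<alpha> - 1)"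
  define b where "b = jbr (l - k) powr (\<alpha> - 1)"
  define c where "c = jbr (j - k) powr (\<alpha> - 1)"
  define e where "e = exp (- \<beta> * \<bar>real_of_int (j - k)\<bar>)"
  have pos: "0 < a" "0 < b" "0 < c" "0 < e"
    unfolding a_def b_def c_def e_def by auto
  have "c \<le> a * b"
    unfolding a_def b_def c_def using jbr_powr_add_le[of "\<alpha> - 1" "j - l" "l - k"] assms by simp
  moreover have "exp (- \<beta> * \<bar>real_of_int (j - l)\<bar>) * exp (- \<beta> * \<bar>real_of_int (l - k)\<bar>) \<le> e"
    unfolding e_def by (rule exp_decay_triangle[OF assms(1)])
  moreover have "decay_weight \<beta> \<alpha> j l * decay_weight \<beta> \<alpha> l k
      = exp (- \<beta> * \<bar>real_of_int (j - l)\<bar>) * exp (- \<beta> * \<bar>real_of_int (l - k)\<bar>)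
        / ((jbr j * jbr k * jbr l ^ 2) * (a * b))"
    unfolding decay_weight_def a_def b_def by (simp add: power2_eq_square mult_ac)
  ultimately have "decay_weight \<beta> \<alpha> j l * decay_weight \<beta> \<alpha> l k \<le> e / ((jbr j * jbr k * jbr l ^ 2) * c)"
    using pos by (auto intro!: frac_le mult_left_mono mult_pos_pos)
  also have "\<dots> = decay_weight \<beta> \<alpha> j k * jbr l powr (-2)"
    unfolding decay_weight_def e_def c_def by (simp add: powr_minus powr_realpow divide_inverse)
  finally show ?thesis .
qed

lemma decay_weight_convolution:
  assumes "0 \<le> \<beta>" "1 \<le> \<alpha>" "finite L"
  shows "(\<Sum>l\<in>L. decay_weight \<beta> \<alpha> j l * decay_weight \<beta> \<alpha> l k) \<le> zeta_jbr 2 * decay_weight \<beta> \<alpha> j k"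
proof -
  have "(\<Sum>l\<in>L. decay_weight \<beta> \<alpha> j l * decay_weight \<beta> \<alpha> l k)
      \<le> decay_weight \<beta> \<alpha> j k * (\<Sum>l\<in>L. jbr l powr (-2))"
    unfolding sum_distrib_left by (intro sum_mono decay_weight_mult_le assms)
  also have "\<dots> \<le> decay_weight \<beta> \<alpha> j k * zeta_jbr 2"
    unfolding zeta_jbr_def using summable_jbr_powr[of 2] assms(3)
    by (intro mult_left_mono finite_sum_le_infsum decay_weight_nonneg) auto
  finally show ?thesis by (simp add: mult.commute)
qed

lemma jbr_powr_le_sum:
  assumes "0 \<le> q"
  shows "jbr (j - k) powr q \<le> 2 powr q * (jbr (l - j) powr q + jbr (l - k) powr q)"
proof -
  have le_twice: "jbr (j - k) powr q \<le> 2 powr q * jbr m powr q"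
    if "jbr (j - k) \<le> 2 * jbr m" for m
  proof -
    have "jbr (j - k) powr q \<le> (2 * jbr m) powr q"
      using that assms by (intro powr_mono2) (auto simp: less_imp_le)
    then show ?thesis by (simp add: powr_mult less_imp_le)
  qed
  have "jbr (j - k) \<le> jbr (l - j) + jbr (l - k)"
    unfolding jbr_def by linarith
  then have "jbr (j - k) powr q \<le> 2 powr q * jbr (l - j) powr q \<or> jbr (j - k) powr q \<le> 2 powr q * jbr (l - k) powr q"
    using le_twice[of "l - j"] le_twice[of "l - k"] by linarith
  then show ?thesis
    by (auto simp: distrib_left add_increasing add_increasing2)
qed

definition tail_const :: "real \<Rightarrow> real"
  where "tail_const \<alpha> = 2 powr (\<alpha> - 1) * 2 * zeta_jbr (\<alpha> - 1)"

lemma tail_const_nonneg: "0 \<le> tail_const \<alpha>"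
  unfolding tail_const_def using zeta_jbr_nonneg by simp

text \<open>Outside \<open>{-N..N}\<close> the factor \<open>\<langle>l\<rangle>\<^sup>-\<^sup>2\<close> gains \<open>(N+1)\<^sup>-\<^sup>2\<close>, while \<open>\<langle>j-k\<rangle>\<^sup>\<alpha>\<^sup>-\<^sup>1\<close> is absorbed
  by the larger of \<open>\<langle>l-j\<rangle>\<^sup>\<alpha>\<^sup>-\<^sup>1\<close>, \<open>\<langle>l-k\<rangle>\<^sup>\<alpha>\<^sup>-\<^sup>1\<close>; the other one remains summable in \<open>l\<close>.\<close>
lemma decay_weight_tail_term:
  assumes "0 \<le> \<beta>" "1 \<le> \<alpha>" "l \<notin> {-int N..int N}"
  shows "decay_weight \<beta> \<alpha> l j * decay_weight \<beta> \<alpha> l k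
    \<le> 2 powr (\<alpha> - 1) / (real N + 1)^2 * decay_weight \<beta> \<alpha> j k
       * (jbr (l - j) powr (-(\<alpha> - 1)) + jbr (l - k) powr (-(\<alpha> - 1)))"
proof -
  define q where "q = \<alpha> - 1"
  define A where "A = jbr (l - j) powr q"
  define B where "B = jbr (l - k) powr q"
  define C where "C = jbr (j - k) powr q"
  define e where "e = exp (- \<beta> * \<bar>real_of_int (j - k)\<bar>)"
  define X where "X = (real N + 1)^2 * jbr j * jbr k * A * B"
  have pos: "0 < A" "0 < B" "0 < C" "0 < jbr j" "0 < jbr k" "0 < e" "0 < X"
    unfolding A_def B_def C_def e_def X_def using jbr_pos by auto
  have "exp (- \<beta> * \<bar>real_of_int (l - j)\<bar>) * exp (- \<beta> * \<bar>real_of_int (l - k)\<bar>) \<le> e"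
    unfolding e_def using exp_decay_triangle[OF assms(1), of j l k] by (simp add: abs_minus_commute)
  moreover have "(real N + 1)^2 \<le> jbr l ^ 2"
    using assms(3) by (intro power_mono) (auto simp: jbr_def)
  moreover have "decay_weight \<beta> \<alpha> l j * decay_weight \<beta> \<alpha> l k
      = exp (- \<beta> * \<bar>real_of_int (l - j)\<bar>) * exp (- \<beta> * \<bar>real_of_int (l - k)\<bar>)
        / (jbr l ^ 2 * jbr j * jbr k * A * B)"
    unfolding decay_weight_def A_def B_def q_def by (simp add: power2_eq_square mult_ac)
  ultimately have "decay_weight \<beta> \<alpha> l j * decay_weight \<beta> \<alpha> l k \<le> e / X"
    unfolding X_def using pos by (auto intro!: frac_le mult_right_mono)
  also have "\<dots> \<le> (e / X) * (2 powr q * (A + B) / C)"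
  proof -
    have "1 \<le> 2 powr q * (A + B) / C"
      using jbr_powr_le_sum[of q j k l] assms pos unfolding A_def B_def C_def q_def
      by (simp add: le_divide_eq_1)
    then have "e / X * 1 \<le> e / X * (2 powr q * (A + B) / C)"
      by (rule mult_left_mono) (use pos in auto)
    then show ?thesis by simp
  qed
  also have "\<dots> = 2 powr q / (real N + 1)^2 * (e / (jbr j * jbr k * C)) * (1 / A + 1 / B)"
    unfolding X_def using pos by (simp add: field_simps)
  finally show ?thesis
    unfolding decay_weight_def e_def C_def A_def B_def q_def powr_minus_divide by simp
qed

lemma decay_weight_tail:
  assumes "0 \<le> \<beta>" "2 < \<alpha>"
  shows "(\<lambda>l. decay_weight \<beta> \<alpha> l j * decay_weight \<beta> \<alpha> l k) summable_on - {-int N..int N}"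
    and "(\<Sum>\<^sub>\<infinity>l\<in>- {-int N..int N}. decay_weight \<beta> \<alpha> l j * decay_weight \<beta> \<alpha> l k)
      \<le> tail_const \<alpha> / (real N + 1)^2 * decay_weight \<beta> \<alpha> j k"
proof -
  define R where "R l = 2 powr (\<alpha> - 1) / (real N + 1)^2 * decay_weight \<beta> \<alpha> j k
      * (jbr (l - j) powr (-(\<alpha> - 1)) + jbr (l - k) powr (-(\<alpha> - 1)))" for l
  have "(R has_sum 2 powr (\<alpha> - 1) / (real N + 1)^2 * decay_weight \<beta> \<alpha> j k
      * (zeta_jbr (\<alpha> - 1) + zeta_jbr (\<alpha> - 1))) UNIV"
    unfolding R_def using assms
    by (intro has_sum_cmult_right has_sum_add jbr_powr_shift) auto
  then have R_sum: "(R has_sum tail_const \<alpha> / (real N + 1)^2 * decay_weight \<beta> \<alpha> j k) UNIV"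
    by (simp add: tail_const_def field_simps)
  have le: "decay_weight \<beta> \<alpha> l j * decay_weight \<beta> \<alpha> l k \<le> R l" if "l \<in> - {-int N..int N}" for l
    unfolding R_def using that assms by (intro decay_weight_tail_term) auto
  have R_nonneg: "0 \<le> R l" for l
    unfolding R_def using decay_weight_nonneg by simp
  show summable: "(\<lambda>l. decay_weight \<beta> \<alpha> l j * decay_weight \<beta> \<alpha> l k) summable_on - {-int N..int N}"
    using le decay_weight_nonneg
    by (intro summable_on_comparison_test[OF summable_on_subset_banach[OF has_sum_imp_summable[OF R_sum]]]) auto
  show "(\<Sum>\<^sub>\<infinity>l\<in>- {-int N..int N}. decay_weight \<beta> \<alpha> l j * decay_weight \<beta> \<alpha> l k)
      \<le> tail_const \<alpha> / (real N + 1)^2 * decay_weight \<beta> \<alpha> j k"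
    using infsum_mono_neutral[OF summable has_sum_imp_summable[OF R_sum]] le R_nonneg
    by (simp add: infsumI[OF R_sum])
qed

lemma decay_weight_reflect:
  assumes "0 \<le> \<beta>" "1 \<le> \<alpha>"
  shows "exp (- \<beta> * \<bar>real_of_int (2 * j)\<bar>) * jbr (2 * j) powr (-\<alpha>) * decay_weight \<beta> \<alpha> (-j) k
    \<le> decay_weight \<beta> \<alpha> j k"
proof -
  have "jbr (j - k) powr (\<alpha> - 1) \<le> jbr (2 * j) powr (\<alpha> - 1) * jbr (-j - k) powr (\<alpha> - 1)"
    using jbr_powr_add_le[of "\<alpha> - 1" "2 * j" "-j - k"] assms by simp
  also have "\<dots> \<le> jbr (2 * j) powr \<alpha> * jbr (-j - k) powr (\<alpha> - 1)"
    using jbr_ge_one by (intro mult_right_mono powr_mono) auto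
  finally have C: "jbr (j - k) powr (\<alpha> - 1) \<le> jbr (2 * j) powr \<alpha> * jbr (-j - k) powr (\<alpha> - 1)" .
  have e: "exp (- \<beta> * \<bar>real_of_int (2 * j)\<bar>) * exp (- \<beta> * \<bar>real_of_int (-j - k)\<bar>)
      \<le> exp (- \<beta> * \<bar>real_of_int (j - k)\<bar>)"
    using exp_decay_triangle[OF assms(1), of j "-j" k] by (simp add: algebra_simps)
  have "exp (- \<beta> * \<bar>real_of_int (2 * j)\<bar>) * jbr (2 * j) powr (-\<alpha>) * decay_weight \<beta> \<alpha> (-j) k
      = exp (- \<beta> * \<bar>real_of_int (2 * j)\<bar>) * exp (- \<beta> * \<bar>real_of_int (-j - k)\<bar>)
        / (jbr j * jbr k * (jbr (2 * j) powr \<alpha> * jbr (-j - k) powr (\<alpha> - 1)))"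
    unfolding decay_weight_def by (simp add: powr_minus_divide)
  also have "\<dots> \<le> decay_weight \<beta> \<alpha> j k"
    unfolding decay_weight_def using C e
    by (intro frac_le mult_left_mono mult_pos_pos mult_nonneg_nonneg) (auto simp: less_imp_le)
  finally show ?thesis .
qed

section \<open>Columns of a unitary operator on \<open>l\<^sup>2(\<int>)\<close>\<close>

lemma has_sum_diff:
  fixes f g :: "'a \<Rightarrow> 'b::topological_ab_group_add"
  assumes "(f has_sum a) A" "(g has_sum b) A"
  shows "((\<lambda>x. f x - g x) has_sum (a - b)) A"
  using has_sum_add[OF assms(1), of "\<lambda>x. - g x" "- b"] assms(2) by (simp add: has_sum_uminus)

lemma unitary_l2_finite_support_norm:
  assumes "unitary_l2 M" "finite F"
  shows "((\<lambda>l. (cmod (\<Sum>m\<in>F. M l m * x m))\<^sup>2) has_sum (\<Sum>m\<in>F. (cmod (x m))\<^sup>2)) UNIV"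
proof -
  define y where "y m = (if m \<in> F then x m else 0)" for m
  have "((\<lambda>m. (cmod (y m))\<^sup>2) has_sum (\<Sum>m\<in>F. (cmod (y m))\<^sup>2)) UNIV"
    by (rule has_sum_finite_neutralI[OF assms(2)]) (auto simp: y_def)
  then have y_sum: "((\<lambda>m. (cmod (y m))\<^sup>2) has_sum (\<Sum>m\<in>F. (cmod (x m))\<^sup>2)) UNIV"
    by (simp add: y_def)
  have "((\<lambda>m. M l m * y m) has_sum (\<Sum>m\<in>F. M l m * y m)) UNIV" for l
    by (rule has_sum_finite_neutralI[OF assms(2)]) (auto simp: y_def)
  then have My: "mat_apply M y = (\<lambda>l. \<Sum>m\<in>F. M l m * x m)"
    unfolding mat_apply_def by (auto simp: y_def intro!: ext infsumI)
  have "is_l2 y"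
    using y_sum unfolding is_l2_def by (rule has_sum_imp_summable)
  then have "is_l2 (mat_apply M y) \<and> l2_norm_sq (mat_apply M y) = l2_norm_sq y"
    using assms(1) unfolding unitary_l2_def by blast
  moreover have "l2_norm_sq y = (\<Sum>m\<in>F. (cmod (x m))\<^sup>2)"
    unfolding l2_norm_sq_def by (rule infsumI[OF y_sum])
  ultimately show ?thesis
    using has_sum_infsum[of "\<lambda>l. (cmod (mat_apply M y l))\<^sup>2" UNIV]
    unfolding My is_l2_def l2_norm_sq_def by simp
qed

lemma cmod_add_square: "(cmod (a + b))\<^sup>2 = (cmod a)\<^sup>2 + (cmod b)\<^sup>2 + 2 * Re (cnj a * b)"
  by (simp only: cmod_power2) (simp add: power2_eq_square algebra_simps)

lemma polarization:
  fixes a b :: complex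
  defines "q p \<equiv> complex_of_real ((cmod (a + p * b))\<^sup>2)"
  shows "cnj a * b = (q 1 - q (-1) + \<i> * (q (-\<i>) - q \<i>)) / 4"
proof -
  have "q p = of_real ((cmod a)\<^sup>2 + (cmod b)\<^sup>2 + 2 * Re (cnj a * (p * b)))" if "cmod p = 1" for p
    unfolding q_def cmod_add_square using that by (simp add: norm_mult)
  then show ?thesis by (simp add: complex_eq_iff)
qed
lemma unitary_l2_columns_orthonormal:
  assumes "unitary_l2 M"
  shows "((\<lambda>l. cnj (M l j) * M l k) has_sum kdelta j k) UNIV"
proof (cases "j = k")
  case True
  have "((\<lambda>l. (cmod (M l j))\<^sup>2) has_sum 1) UNIV"
    using unitary_l2_finite_support_norm[OF assms, of "{j}" "\<lambda>_. 1"] by simp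
  then have "((\<lambda>l. complex_of_real ((cmod (M l j))\<^sup>2)) has_sum 1) UNIV"
    by (metis has_sum_of_real of_real_1)
  then show ?thesis
    using True unfolding complex_norm_square by (simp add: kdelta_def mult.commute)
next
  case False
  define q where "q p l = complex_of_real ((cmod (M l j + p * M l k))\<^sup>2)" for p l
  have "(q p has_sum 2) UNIV" if "cmod p = 1" for p
  proof -
    have "((\<lambda>l. (cmod (\<Sum>m\<in>{j, k}. M l m * (if m = j then 1 else p)))\<^sup>2)
        has_sum (\<Sum>m\<in>{j, k}. (cmod (if m = j then 1 else p))\<^sup>2)) UNIV"
      by (rule unitary_l2_finite_support_norm[OF assms]) simp
    then have "((\<lambda>l. (cmod (M l j + p * M l k))\<^sup>2) has_sum 2) UNIV"
      using False that by (simp add: mult.commute)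
    then show ?thesis
      unfolding q_def by (metis has_sum_of_real of_real_numeral)
  qed
  then have "((\<lambda>l. (q 1 l - q (-1) l + \<i> * (q (-\<i>) l - q \<i> l)) / 4) has_sum ((2 - 2 + \<i> * (2 - 2)) / 4)) UNIV"
    by (intro has_sum_divide_const has_sum_add has_sum_diff has_sum_cmult_right) auto
  then show ?thesis
    using False unfolding q_def polarization[symmetric] by (simp add: kdelta_def)
qed

section \<open>Unitary approximation of the truncated operator\<close>

lemma truncated_gram_defect_bound:
  fixes M :: "int \<Rightarrow> int \<Rightarrow> complex"
  assumes "unitary_l2 M" "0 \<le> \<beta>" "2 < \<alpha>" "0 \<le> c"
    and off_block: "\<And>l j. l \<notin> {-int N..int N} \<Longrightarrow> j \<in> {-int N..int N}
      \<Longrightarrow> cmod (M l j) \<le> c * decay_weight \<beta> \<alpha> l j"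
    and "j \<in> {-int N..int N}" "k \<in> {-int N..int N}"
  shows "cmod (kdelta j k - (\<Sum>l\<in>{-int N..int N}. cnj (M l j) * M l k))
    \<le> c\<^sup>2 * tail_const \<alpha> / (real N + 1)\<^sup>2 * decay_weight \<beta> \<alpha> j k"
proof -
  let ?I = "{-int N..int N}" and ?f = "\<lambda>l. cnj (M l j) * M l k"
    and ?w = "\<lambda>l. decay_weight \<beta> \<alpha> l j * decay_weight \<beta> \<alpha> l k"
  have total: "(?f has_sum kdelta j k) UNIV"
    by (rule unitary_l2_columns_orthonormal[OF assms(1)])
  have tail: "?f summable_on - ?I"
    using summable_on_subset_banach[OF has_sum_imp_summable[OF total]] by simp
  have "(?f has_sum ((\<Sum>l\<in>?I. ?f l) + (\<Sum>\<^sub>\<infinity>l\<in>- ?I. ?f l))) (?I \<union> - ?I)"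
    by (rule has_sum_Un_disjoint[OF has_sum_finite has_sum_infsum[OF tail]]) auto
  then have defect: "kdelta j k - (\<Sum>l\<in>?I. ?f l) = (\<Sum>\<^sub>\<infinity>l\<in>- ?I. ?f l)"
    using has_sum_unique[OF total] by fastforce
  have norm_tail: "(\<lambda>l. norm (?f l)) summable_on - ?I"
    using tail by (simp add: summable_on_iff_abs_summable_on_complex)
  have "cmod (\<Sum>\<^sub>\<infinity>l\<in>- ?I. ?f l) \<le> (\<Sum>\<^sub>\<infinity>l\<in>- ?I. norm (?f l))"
    by (rule norm_infsum_bound) (use norm_tail in simp)
  also have "\<dots> \<le> (\<Sum>\<^sub>\<infinity>l\<in>- ?I. c\<^sup>2 * ?w l)"
  proof (rule infsum_mono[OF norm_tail summable_on_cmult_right[OF decay_weight_tail(1)[OF assms(2,3)]]])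
    fix l assume "l \<in> - ?I"
    then have "cmod (M l j) * cmod (M l k) \<le> (c * decay_weight \<beta> \<alpha> l j) * (c * decay_weight \<beta> \<alpha> l k)"
      using off_block assms(4,6,7) decay_weight_nonneg by (intro mult_mono) auto
    then show "norm (?f l) \<le> c\<^sup>2 * ?w l"
      by (simp add: norm_mult power2_eq_square mult_ac)
  qed
  also have "\<dots> = c\<^sup>2 * (\<Sum>\<^sub>\<infinity>l\<in>- ?I. ?w l)"
    by (rule infsum_cmult_right')
  also have "\<dots> \<le> c\<^sup>2 * (tail_const \<alpha> / (real N + 1)\<^sup>2 * decay_weight \<beta> \<alpha> j k)"
    by (rule mult_left_mono[OF decay_weight_tail(2)[OF assms(2,3)]]) simp
  finally show ?thesis
    unfolding defect by simp
qed

lemma truncated_gram_defect_small_hermitian: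
  fixes M :: "int \<Rightarrow> int \<Rightarrow> complex"
  assumes "unitary_l2 M" "0 \<le> \<beta>" "2 < \<alpha>" "0 \<le> c"
    and off_block: "\<And>l j. l \<notin> {-int N..int N} \<Longrightarrow> j \<in> {-int N..int N}
      \<Longrightarrow> cmod (M l j) \<le> c * decay_weight \<beta> \<alpha> l j"
    and N_large: "2 * zeta_jbr 2 * c\<^sup>2 * tail_const \<alpha> \<le> real N + 1"
  shows "small_hermitian {-int N..int N} (\<lambda>j k. kdelta j k - (\<Sum>l\<in>{-int N..int N}. cnj (M l j) * M l k))
    (decay_weight \<beta> \<alpha>) (zeta_jbr 2) (c\<^sup>2 * tail_const \<alpha> / (real N + 1)\<^sup>2)"
proof
  have "real N + 1 \<le> (real N + 1)\<^sup>2"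
    by (simp add: power2_eq_square)
  then show "zeta_jbr 2 * (c\<^sup>2 * tail_const \<alpha> / (real N + 1)\<^sup>2) \<le> 1/2"
    using N_large by (simp add: field_simps)
  show "(\<Sum>l\<in>{-int N..int N}. decay_weight \<beta> \<alpha> j l * decay_weight \<beta> \<alpha> l k) \<le> zeta_jbr 2 * decay_weight \<beta> \<alpha> j k"
    for j k using assms(2,3) by (intro decay_weight_convolution) auto
  show "cmod (kdelta j k - (\<Sum>l\<in>{-int N..int N}. cnj (M l j) * M l k))
      \<le> c\<^sup>2 * tail_const \<alpha> / (real N + 1)\<^sup>2 * decay_weight \<beta> \<alpha> j k"
    if "j \<in> {-int N..int N}" "k \<in> {-int N..int N}" for j k
    by (rule truncated_gram_defect_bound[OF assms(1-4) off_block that])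
qed (use assms(2,3) zeta_jbr_2_ge_one tail_const_nonneg decay_weight_nonneg decay_weight_le_one
  in \<open>auto simp: kdelta_def mult.commute\<close>)

lemma integral_norm_bound_interval:
  assumes "f integrable_on {0..2 * pi}" "\<And>t. cmod (f t) \<le> B"
  shows "cmod (integral {0..2 * pi} f) \<le> 2 * pi * B"
  using has_integral_bound[of B f "integral {0..2 * pi} f" 0 "2 * pi"] assms
    order_trans[OF norm_ge_zero assms(2)]
  by (auto simp: has_integral_integral mult.commute)

lemma model_entry_bound:
  fixes Nm :: "int \<Rightarrow> int \<Rightarrow> complex" and v :: "int \<Rightarrow> real \<Rightarrow> complex"
  assumes "0 < h" and v_int: "v (2 * j) integrable_on {0..2 * pi}"
    and v_bound: "\<And>t. cmod (v (2 * j) t) \<le> c_v * exp (- \<beta> * \<bar>real_of_int (2 * j)\<bar>) * jbr (2 * j) powr (- \<alpha>)"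
    and close: "cmod (Nm j l
        - (if j = l then exp (- \<i> * of_real (2 * pi * (of_int l)\<^sup>2 / h)) else 0)
        - (if - j = l then exp (- \<i> * of_real (2 * pi * (of_int l)\<^sup>2 / h)) / (\<i> * of_real h)
                           * integral {0..2 * pi} (v (- 2 * l)) else 0))
      \<le> c * decay_weight \<beta> \<alpha> j l"
  shows "cmod (Nm j l) \<le> (if j = l then 1 else 0)
    + (if - j = l then 2 * pi * c_v / h * (exp (- \<beta> * \<bar>real_of_int (2 * j)\<bar>) * jbr (2 * j) powr (- \<alpha>)) else 0)
    + c * decay_weight \<beta> \<alpha> j l"
proof -
  have unimodular: "cmod (exp (- \<i> * complex_of_real y)) = 1" for y
    using norm_exp_i_times[of "- y"] by simp
  define D where "D = (if j = l then exp (- \<i> * of_real (2 * pi * (of_int l)\<^sup>2 / h)) else 0)"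
  define R where "R = (if - j = l then exp (- \<i> * of_real (2 * pi * (of_int l)\<^sup>2 / h)) / (\<i> * of_real h)
      * integral {0..2 * pi} (v (- 2 * l)) else 0)"
  have "cmod R \<le> (if - j = l then 2 * pi * c_v / h * (exp (- \<beta> * \<bar>real_of_int (2 * j)\<bar>) * jbr (2 * j) powr (- \<alpha>)) else 0)"
  proof (cases "- j = l")
    case True
    then have "l = - j" by simp
    then have "cmod R = cmod (integral {0..2 * pi} (v (2 * j))) / h"
      unfolding R_def using \<open>0 < h\<close> by (simp add: norm_mult norm_divide unimodular)
    also have "\<dots> \<le> 2 * pi * (c_v * exp (- \<beta> * \<bar>real_of_int (2 * j)\<bar>) * jbr (2 * j) powr (- \<alpha>)) / h"
      using integral_norm_bound_interval[OF v_int v_bound] \<open>0 < h\<close> by (simp add: divide_right_mono)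
    finally show ?thesis
      using True by simp
  qed (simp add: R_def)
  moreover have "cmod D = (if j = l then 1 else 0)"
    unfolding D_def by (simp add: unimodular)
  moreover have "cmod (Nm j l) \<le> cmod D + cmod R + cmod (Nm j l - D - R)"
    using norm_triangle_ineq[of D R] norm_triangle_ineq[of "D + R" "Nm j l - D - R"] by simp
  ultimately show ?thesis
    using close unfolding D_def R_def by linarith
qed

lemma weighted_row_sum_bound:
  fixes A :: "int \<Rightarrow> int \<Rightarrow> complex"
  assumes "0 \<le> \<beta>" "1 \<le> \<alpha>" "0 \<le> b" "0 \<le> c" "finite I" "j \<in> I" "- j \<in> I"
    and entry: "\<And>l. l \<in> I \<Longrightarrow> cmod (A j l) \<le> (if j = l then 1 else 0)
      + (if - j = l then b * (exp (- \<beta> * \<bar>real_of_int (2 * j)\<bar>) * jbr (2 * j) powr (- \<alpha>)) else 0)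
      + c * decay_weight \<beta> \<alpha> j l"
  shows "(\<Sum>l\<in>I. cmod (A j l) * decay_weight \<beta> \<alpha> l k) \<le> (1 + b + c * zeta_jbr 2) * decay_weight \<beta> \<alpha> j k"
proof -
  let ?w = "decay_weight \<beta> \<alpha>"
  define r where "r = exp (- \<beta> * \<bar>real_of_int (2 * j)\<bar>) * jbr (2 * j) powr (- \<alpha>)"
  have "(\<Sum>l\<in>I. cmod (A j l) * ?w l k)
      \<le> (\<Sum>l\<in>I. ((if j = l then 1 else 0) + (if - j = l then b * r else 0) + c * ?w j l) * ?w l k)"
    unfolding r_def by (intro sum_mono mult_right_mono entry decay_weight_nonneg)
  also have "\<dots> = (\<Sum>l\<in>I. if j = l then ?w l k else 0) + (\<Sum>l\<in>I. if - j = l then b * r * ?w l k else 0)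
      + c * (\<Sum>l\<in>I. ?w j l * ?w l k)"
    by (simp add: distrib_right sum.distrib sum_distrib_left mult.assoc if_distrib[of "\<lambda>x. x * _"] cong: if_cong)
  also have "\<dots> = ?w j k + b * (r * ?w (- j) k) + c * (\<Sum>l\<in>I. ?w j l * ?w l k)"
    using assms(5-7) by (simp add: sum.delta mult.assoc)
  also have "\<dots> \<le> ?w j k + b * ?w j k + c * (zeta_jbr 2 * ?w j k)"
    using decay_weight_reflect[OF assms(1,2), of j k] decay_weight_convolution[OF assms(1,2,5)] assms(3,4)
    unfolding r_def by (intro add_mono mult_left_mono order_refl) auto
  finally show ?thesis
    by (simp add: algebra_simps)
qed

lemma truncation_unitary_approximation:
  fixes h \<alpha> c c_v \<beta> :: real and v :: "int \<Rightarrow> real \<Rightarrow> complex" and Nm :: "int \<Rightarrow> int \<Rightarrow> complex"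
  assumes "0 < h" "2 < \<alpha>" "0 < c" "0 \<le> \<beta>"
    and v_int: "\<forall>k. v k integrable_on {0..2 * pi}"
    and v_bound: "\<forall>k t. cmod (v k t) \<le> c_v * exp (- \<beta> * \<bar>real_of_int k\<bar>) * jbr k powr (- \<alpha>)"
    and "unitary_l2 Nm"
    and close: "\<forall>j k. cmod (Nm j k
        - (if j = k then exp (- \<i> * of_real (2 * pi * (of_int k)\<^sup>2 / h)) else 0)
        - (if - j = k then exp (- \<i> * of_real (2 * pi * (of_int k)\<^sup>2 / h)) / (\<i> * of_real h)
                           * integral {0..2 * pi} (v (- 2 * k)) else 0))
      \<le> c * exp (- \<beta> * \<bar>real_of_int (j - k)\<bar>) / (jbr j * jbr k * jbr (j - k) powr (\<alpha> - 1))"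
    and N_large: "2 * zeta_jbr 2 * c\<^sup>2 * tail_const \<alpha> \<le> real N + 1"
  shows "\<exists>U. unitary_fin N U \<and>
    (\<forall>j\<in>{-int N..int N}. \<forall>k\<in>{-int N..int N}. cmod (U j k - Nm j k)
      \<le> 2 * c\<^sup>2 * tail_const \<alpha> * (1 + 2 * pi * c_v / h + c * zeta_jbr 2)
         * exp (- \<beta> * \<bar>real_of_int (j - k)\<bar>) / (jbr j * jbr k * (real N + 1)\<^sup>2 * jbr (j - k) powr (\<alpha> - 1)))"
proof -
  define I where "I = {-int N..int N}"
  define \<epsilon> where "\<epsilon> = c\<^sup>2 * tail_const \<alpha> / (real N + 1)\<^sup>2"
  define E where "E j k = kdelta j k - (\<Sum>l\<in>I. cnj (Nm l j) * Nm l k)" for j k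
  have finite_I: "finite I" and uminus_I: "j \<in> I \<Longrightarrow> - j \<in> I" for j
    unfolding I_def by auto
  have close_weighted: "cmod (Nm j k
        - (if j = k then exp (- \<i> * of_real (2 * pi * (of_int k)\<^sup>2 / h)) else 0)
        - (if - j = k then exp (- \<i> * of_real (2 * pi * (of_int k)\<^sup>2 / h)) / (\<i> * of_real h)
                           * integral {0..2 * pi} (v (- 2 * k)) else 0))
      \<le> c * decay_weight \<beta> \<alpha> j k" for j k
    using close unfolding decay_weight_def by simp
  have "0 \<le> c_v"
  proof -
    have "0 \<le> c_v * exp (- \<beta> * \<bar>real_of_int 0\<bar>) * jbr 0 powr (- \<alpha>)"
      using v_bound norm_ge_zero order_trans by blast
    then show ?thesis by (simp add: jbr_def)
  qed
  have "cmod (Nm l j) \<le> c * decay_weight \<beta> \<alpha> l j" if "l \<notin> I" "j \<in> I" for l j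
    using close_weighted[of l j] that unfolding I_def by auto
  then interpret small_hermitian I E "decay_weight \<beta> \<alpha>" "zeta_jbr 2" \<epsilon>
    unfolding I_def E_def \<epsilon>_def
    using truncated_gram_defect_small_hermitian[OF \<open>unitary_l2 Nm\<close> assms(4,2) _ _ N_large] assms(3)
    by (simp add: I_def)
  define U where "U = mmul I Nm inv_sqrt"
  have gram: "(\<Sum>l\<in>I. cnj (Nm l j) * Nm l k) = kdelta j k - E j k" for j k
    by (simp add: E_def)
  have unitary: "unitary_fin N U"
    unfolding unitary_fin_def U_def I_def[symmetric] kdelta_def[symmetric]
    using mmul_inv_sqrt_unitary[OF gram] by blast
  have bound: "cmod (U j k - Nm j k)
      \<le> 2 * \<epsilon> * ((1 + 2 * pi * c_v / h + c * zeta_jbr 2) * decay_weight \<beta> \<alpha> j k)"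
    if "j \<in> I" "k \<in> I" for j k
  proof -
    have "(\<Sum>l\<in>I. cmod (Nm j l) * decay_weight \<beta> \<alpha> l k)
        \<le> (1 + 2 * pi * c_v / h + c * zeta_jbr 2) * decay_weight \<beta> \<alpha> j k"
      using assms(1-3) \<open>0 \<le> c_v\<close>
      by (intro weighted_row_sum_bound[OF assms(4) _ _ _ finite_I that(1) uminus_I[OF that(1)]]
          model_entry_bound[OF \<open>0 < h\<close> v_int[rule_format] v_bound[rule_format] close_weighted]) auto
    then show ?thesis
      using mmul_inv_sqrt_minus_bound[OF \<open>k \<in> I\<close>, of Nm j] eps_nonneg unfolding U_def
      by (meson mult_left_mono order_trans mult_nonneg_nonneg zero_le_numeral)
  qed
  have N_pos: "real N + 1 \<noteq> 0"
    by linarith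
  show ?thesis
  proof (intro exI[of _ U] conjI ballI)
    fix j k assume "j \<in> {-int N..int N}" "k \<in> {-int N..int N}"
    then show "cmod (U j k - Nm j k)
      \<le> 2 * c\<^sup>2 * tail_const \<alpha> * (1 + 2 * pi * c_v / h + c * zeta_jbr 2)
         * exp (- \<beta> * \<bar>real_of_int (j - k)\<bar>) / (jbr j * jbr k * (real N + 1)\<^sup>2 * jbr (j - k) powr (\<alpha> - 1))"
      using bound[of j k] N_pos unfolding I_def \<epsilon>_def decay_weight_def by (simp add: field_simps)
  qed (rule unitary)
qed

theorem mainTheorem12:
  fixes h \<alpha> c c_v :: real
  assumes "h > 0" and "\<alpha> > 2" and "c > 0"
  shows "\<exists>c_w::real. \<forall>(\<beta>::real) (v :: int \<Rightarrow> real \<Rightarrow> complex) (Nm :: int \<Rightarrow> int \<Rightarrow> complex).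
    (\<beta> \<ge> 0
     \<and> (\<forall>x t. potential v x t \<in> \<real>)
     \<and> (\<forall>x t. potential v x (t + 2 * pi) = potential v x t)
     \<and> (\<forall>t. v 0 t = 0)
     \<and> (\<forall>k. v k integrable_on {0..2 * pi})
     \<and> (\<forall>k t. cmod (v k t) \<le> c_v * exp (- \<beta> * \<bar>real_of_int k\<bar>) * jbr k powr (- \<alpha>))
     \<and> unitary_l2 Nm
     \<and> (\<forall>j k. cmod (Nm j k
              - (if j = k then exp (- \<i> * of_real (2 * pi * (of_int k)\<^sup>2 / h)) else 0)
              - (if - j = k then exp (- \<i> * of_real (2 * pi * (of_int k)\<^sup>2 / h)) / (\<i> * of_real h)
                                 * integral {0..2 * pi} (v (- 2 * k)) else 0))
            \<le> c * exp (- \<beta> * \<bar>real_of_int (j - k)\<bar>) / (jbr j * jbr k * jbr (j - k) powr (\<alpha> - 1))))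
    \<longrightarrow> (\<exists>N0::nat. \<forall>N\<ge>N0. \<exists>U :: int \<Rightarrow> int \<Rightarrow> complex.
          unitary_fin N U \<and>
          (\<forall>j\<in>{-int N..int N}. \<forall>k\<in>{-int N..int N}.
             cmod (U j k - Nm j k)
               \<le> c_w * exp (- \<beta> * \<bar>real_of_int (j - k)\<bar>)
                 / (jbr j * jbr k * (real N + 1)\<^sup>2 * jbr (j - k) powr (\<alpha> - 1))))"
proof -
  define c_w where "c_w = 2 * c\<^sup>2 * tail_const \<alpha> * (1 + 2 * pi * c_v / h + c * zeta_jbr 2)"
  define N0 where "N0 = nat \<lceil>2 * zeta_jbr 2 * c\<^sup>2 * tail_const \<alpha>\<rceil>"
  have N_large: "2 * zeta_jbr 2 * c\<^sup>2 * tail_const \<alpha> \<le> real N + 1" if "N0 \<le> N" for N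
    using that real_nat_ceiling_ge[of "2 * zeta_jbr 2 * c\<^sup>2 * tail_const \<alpha>"] unfolding N0_def by linarith
  show ?thesis
  proof (intro exI[of _ c_w] allI impI exI[of _ N0], elim conjE, goal_cases)
    case (1 \<beta> v Nm N)
    show ?case
      unfolding c_w_def
      by (rule truncation_unitary_approximation[OF assms 1(2,6-9) N_large[OF 1(1)]])
  qed
qed

end
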